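(* Let $(\mathbb{R},\nu,\tau,\tau^{*})$ be a probabilistic normed space on the real line whose probabilistic norm $\nu$ has the LG-property, i.e. for every $x>0$, $\lim_{p\to\infty}\nu_{p}(x)=0$. If $A\subset\mathbb{R}$ is $D$-bounded, then $A$ is bounded in the classical sense (i.e. there is $k>0$ with $|p|\le k$ for all $p\in A$).
   Context: $\Delta^{+}$ is the set of functions $F:[-\infty,+\infty]\to[0,1]$ that are left-continuous on $\mathbb{R}$, nondecreasing, with $F(0)=0$ and $F(+\infty)=1$ (distribution functions), ordered pointwise; $D^{+}=\{F\in\Delta^{+}: l^{-}F(+\infty)=1\}$, where $l^{-}f(x)=\lim_{t\to x^{-}}f(t)$. $\varepsilon_0$ is the d.f. equal to $0$ for $x\le 0$ and $1$ for $x>0$. A triangle function is a map $\tau:\Delta^+\times\Delta^+\to\Delta^+$ that is associative, commutative, nondecreasing in each argument, and has $\varepsilon_0$ as unit. A probabilistic normed (PN) space is a quadruple $(V,\nu,\tau,\tau^* )$ with $V$ a real vector space, $\tau\le\tau^*$ continuous triangle functions (continuity w.r.t. weak convergence), and $\nu:V\to\Delta^+$, $p\mapsto\nu_p$, such that for all $p,q\in V$: (N1) $\nu_p=\varepsilon_0$ iff $p=\theta$ (the zero vector); (N2) $\nu_{-p}=\nu_p$; (N3) $\nu_{p+q}\ge\tau(\nu_p,\nu_q)$; (N4) $\nu_p\le\tau^*(\nu_{\lambda p},\nu_{(1-\lambda)p})$ for all $\lambda\in[0,1]$. For a nonempty $A\subseteq V$, the probabilistic radius is $R_A(x)=l^{-}\inf\{\nu_p(x):p\in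 A\}$ for $x\in[0,+\infty)$ and $R_A(+\infty)=1$; $A$ is called $D$-bounded if $R_A\in D^{+}$. *)

theory Defs
  imports "HOL-Analysis.Analysis" "HOL-Library.Extended_Real"
begin

definition in_Delta :: "(ereal \<Rightarrow> real) \<Rightarrow> bool" where
  "in_Delta F \<longleftrightarrow>
     (\<forall>x. 0 \<le> F x \<and> F x \<le> 1) \<and> mono F \<and>
     (\<forall>x::real. ((\<lambda>t::real. F (ereal t)) \<longlongrightarrow> F (ereal x)) (at_left x)) \<and>
     F 0 = 0 \<and> F PInfty = 1"

text \<open>D+ : l^- F(+\<infinity>) = 1, i.e. F(x) tends to 1 as real x tends to +\<infinity>.\<close>
definition in_D :: "(ereal \<Rightarrow> real) \<Rightarrow> bool" where
  "in_D F \<longleftrightarrow> in_Delta F \<and> ((\<lambda>t::real. F (ereal t)) \<longlongrightarrow> 1) at_top"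

definition eps0 :: "ereal \<Rightarrow> real" where
  "eps0 x = (if x \<le> 0 then 0 else 1)"

definition weak_conv :: "(nat \<Rightarrow> ereal \<Rightarrow> real) \<Rightarrow> (ereal \<Rightarrow> real) \<Rightarrow> bool" where
  "weak_conv Fn F \<longleftrightarrow>
     (\<forall>x::real. isCont (\<lambda>t::real. F (ereal t)) x \<longrightarrow> (\<lambda>n. Fn n (ereal x)) \<longlonglongrightarrow> F (ereal x))"

definition triangle_function ::
  "((ereal \<Rightarrow> real) \<Rightarrow> (ereal \<Rightarrow> real) \<Rightarrow> (ereal \<Rightarrow> real)) \<Rightarrow> bool" where
  "triangle_function T \<longleftrightarrow>
     (\<forall>F G. in_Delta F \<longrightarrow> in_Delta G \<longrightarrow> in_Delta (T F G)) \<and>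
     (\<forall>F G. in_Delta F \<longrightarrow> in_Delta G \<longrightarrow> T F G = T G F) \<and>
     (\<forall>F G H. in_Delta F \<longrightarrow> in_Delta G \<longrightarrow> in_Delta H \<longrightarrow> T (T F G) H = T F (T G H)) \<and>
     (\<forall>F F' G. in_Delta F \<longrightarrow> in_Delta F' \<longrightarrow> in_Delta G \<longrightarrow> F \<le> F' \<longrightarrow> T F G \<le> T F' G) \<and>
     (\<forall>F. in_Delta F \<longrightarrow> T F eps0 = F)"

text \<open>Continuity w.r.t. weak convergence (the topology is metrizable, so sequential).\<close>
definition continuous_tf ::
  "((ereal \<Rightarrow> real) \<Rightarrow> (ereal \<Rightarrow> real) \<Rightarrow> (ereal \<Rightarrow> real)) \<Rightarrow> bool" where
  "continuous_tf T \<longleftrightarrow>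
     (\<forall>Fn F Gn G. (\<forall>n. in_Delta (Fn n)) \<longrightarrow> (\<forall>n. in_Delta (Gn n)) \<longrightarrow> in_Delta F \<longrightarrow> in_Delta G \<longrightarrow>
        weak_conv Fn F \<longrightarrow> weak_conv Gn G \<longrightarrow> weak_conv (\<lambda>n. T (Fn n) (Gn n)) (T F G))"

definition PN_space ::
  "('a::real_vector \<Rightarrow> ereal \<Rightarrow> real) \<Rightarrow>
   ((ereal \<Rightarrow> real) \<Rightarrow> (ereal \<Rightarrow> real) \<Rightarrow> (ereal \<Rightarrow> real)) \<Rightarrow>
   ((ereal \<Rightarrow> real) \<Rightarrow> (ereal \<Rightarrow> real) \<Rightarrow> (ereal \<Rightarrow> real)) \<Rightarrow> bool" where
  "PN_space \<nu> T Ts \<longleftrightarrow>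
     triangle_function T \<and> continuous_tf T \<and>
     triangle_function Ts \<and> continuous_tf Ts \<and>
     (\<forall>F G. in_Delta F \<longrightarrow> in_Delta G \<longrightarrow> T F G \<le> Ts F G) \<and>
     (\<forall>p. in_Delta (\<nu> p)) \<and>
     (\<forall>p. \<nu> p = eps0 \<longleftrightarrow> p = 0) \<and>
     (\<forall>p. \<nu> (- p) = \<nu> p) \<and>
     (\<forall>p q. \<nu> (p + q) \<ge> T (\<nu> p) (\<nu> q)) \<and>
     (\<forall>p l. 0 \<le> l \<and> l \<le> 1 \<longrightarrow> \<nu> p \<le> Ts (\<nu> (l *\<^sub>R p)) (\<nu> ((1 - l) *\<^sub>R p)))"

text \<open>Probabilistic radius; for x<0 (outside the paper's domain [0,+\<infinity>]) set to 0.\<close>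
definition prob_radius :: "('a \<Rightarrow> ereal \<Rightarrow> real) \<Rightarrow> 'a set \<Rightarrow> ereal \<Rightarrow> real" where
  "prob_radius \<nu> A x =
     (case x of
        ereal r \<Rightarrow> (if r < 0 then 0 else Lim (at_left r) (\<lambda>t::real. INF p\<in>A. \<nu> p (ereal t)))
      | PInfty \<Rightarrow> 1
      | MInfty \<Rightarrow> 0)"

definition D_bounded :: "('a \<Rightarrow> ereal \<Rightarrow> real) \<Rightarrow> 'a set \<Rightarrow> bool" where
  "D_bounded \<nu> A \<longleftrightarrow> A \<noteq> {} \<and> in_D (prob_radius \<nu> A)"

end

theory Submission
  imports Defs
begin

text \<open>For $t > 0$ the probabilistic radius $R_A(t)$ is a left limit of the nondecreasing function
  $s \mapsto \inf_{p \in A} \nu_p(s)$, hence bounded by $\nu_p(t)$ for every $p \in A$. Since $R_A$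
  tends to $1$, some $t_0 > 0$ gives $\nu_p(t_0) > 1/2$ uniformly on $A$, whereas by the
  LG-property and $\nu_{-p} = \nu_p$ we have $\nu_p(t_0) < 1/2$ once $|p|$ is large.\<close>

lemma mono_Lim_at_left_le:
  fixes g :: "real \<Rightarrow> real"
  assumes "mono g"
  shows "Lim (at_left r) g \<le> g r"
proof -
  have "(g \<longlongrightarrow> Sup (g ` ({..<r} \<inter> UNIV))) (at r within ({..<r} \<inter> UNIV))"
    using assms by (intro Lim_left_bound[where K = "g r"]) (auto simp: mono_def)
  then have "(g \<longlongrightarrow> Sup (g ` {..<r})) (at_left r)"
    by (simp add: lessThan_def)
  then have "Lim (at_left r) g = Sup (g ` {..<r})"
    by (intro tendsto_Lim) (simp_all add: trivial_limit_at_left_real)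
  also have "\<dots> \<le> g r"
    using assms by (intro cSup_least) (auto simp: mono_def)
  finally show ?thesis .
qed

lemma prob_radius_le:
  assumes "\<And>q. in_Delta (\<nu> q)" and "p \<in> A" and "0 \<le> r"
  shows "prob_radius \<nu> A (ereal r) \<le> \<nu> p (ereal r)"
proof -
  define g where "g t = (INF q\<in>A. \<nu> q (ereal t))" for t
  have bdd: "bdd_below ((\<lambda>q. \<nu> q (ereal t)) ` A)" for t
    using assms(1) by (intro bdd_belowI2[where m = 0]) (auto simp: in_Delta_def)
  have "mono g"
  proof (rule monoI)
    fix s t :: real assume "s \<le> t"
    show "g s \<le> g t"
      unfolding g_def
    proof (rule cINF_mono[OF _ bdd])
      show "A \<noteq> {}" using assms(2) by blast
      fix q assume "q \<in> A"
      then show "\<exists>q'\<in>A. \<nu> q' (ereal s) \<le> \<nu> q (ereal t)"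
        using assms(1)[of q] \<open>s \<le> t\<close> by (auto simp: in_Delta_def mono_def intro!: bexI[of _ q])
    qed
  qed
  have "prob_radius \<nu> A (ereal r) = Lim (at_left r) g"
    using assms(3) by (simp add: prob_radius_def g_def[abs_def])
  also have "\<dots> \<le> g r"
    using \<open>mono g\<close> by (rule mono_Lim_at_left_le)
  also have "\<dots> \<le> \<nu> p (ereal r)"
    unfolding g_def using bdd assms(2) by (rule cINF_lower)
  finally show ?thesis .
qed

lemma D_bounded_imp_uniformly_large:
  assumes "\<And>q. in_Delta (\<nu> q)" and "D_bounded \<nu> A" and "c < 1"
  obtains t where "t > 0" and "\<And>p. p \<in> A \<Longrightarrow> c < \<nu> p (ereal t)"
proof -
  have "((\<lambda>t::real. prob_radius \<nu> A (ereal t)) \<longlongrightarrow> 1) at_top"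
    using assms(2) by (simp add: D_bounded_def in_D_def)
  then have "eventually (\<lambda>t. c < prob_radius \<nu> A (ereal t)) at_top"
    using assms(3) by (rule order_tendstoD)
  then have "eventually (\<lambda>t. 0 < t \<and> c < prob_radius \<nu> A (ereal t)) at_top"
    using eventually_gt_at_top[of 0] by (rule eventually_conj[rotated])
  then obtain t where "t > 0" and "c < prob_radius \<nu> A (ereal t)"
    using eventually_happens'[OF trivial_limit_at_top_linorder] by blast
  show ?thesis
  proof (rule that[OF \<open>t > 0\<close>])
    fix p assume "p \<in> A"
    with prob_radius_le[of \<nu> p A t] assms(1) \<open>t > 0\<close> \<open>c < prob_radius \<nu> A (ereal t)\<close>
    show "c < \<nu> p (ereal t)" by fastforce
  qed
qed

theorem lemma13:
  fixes \<nu> :: "real \<Rightarrow> ereal \<Rightarrow> real"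
    and T Ts :: "(ereal \<Rightarrow> real) \<Rightarrow> (ereal \<Rightarrow> real) \<Rightarrow> (ereal \<Rightarrow> real)"
    and A :: "real set"
  assumes "PN_space \<nu> T Ts"
    and LG: "\<forall>x::real. x > 0 \<longrightarrow> ((\<lambda>p. \<nu> p (ereal x)) \<longlongrightarrow> 0) at_top"
    and "D_bounded \<nu> A"
  shows "\<exists>k>0. \<forall>p\<in>A. \<bar>p\<bar> \<le> k"
proof -
  have Delta: "\<And>q. in_Delta (\<nu> q)" and "\<And>q. \<nu> (- q) = \<nu> q"
    using assms(1) by (auto simp: PN_space_def)
  then have abs_eq: "\<nu> \<bar>q\<bar> = \<nu> q" for q
    by (cases "q \<ge> 0") auto
  obtain t where "t > 0" and large: "\<And>p. p \<in> A \<Longrightarrow> 1/2 < \<nu> p (ereal t)"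
    using D_bounded_imp_uniformly_large[OF Delta assms(3), of "1/2"] by auto
  have "((\<lambda>q. \<nu> q (ereal t)) \<longlongrightarrow> 0) at_top"
    using LG \<open>t > 0\<close> by simp
  then have "eventually (\<lambda>q. \<nu> q (ereal t) < 1/2) at_top"
    by (rule order_tendstoD) simp
  then obtain N where small: "\<And>q. q \<ge> N \<Longrightarrow> \<nu> q (ereal t) < 1/2"
    by (auto simp: eventually_at_top_linorder)
  have "\<bar>p\<bar> < N" if "p \<in> A" for p
    using small[of "\<bar>p\<bar>"] large[OF that] abs_eq[of p] by (metis not_less not_less_iff_gr_or_eq)
  then show ?thesis
    by (intro exI[of _ "max N 1"]) (auto simp: le_max_iff_disj less_imp_le)
qed

end
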